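(* For an $R$-module $M$ the following are equivalent: (i) $M$ is simple-$\mathcal F$-torsion-free; (ii) $M$ is prime, uniform, and $\mathrm{Ann}_R(M)\in\mathcal F^*$; (iii) there exist $\mathfrak p\in\mathcal F^*$ and a monomorphism $M\hookrightarrow\kappa(\mathfrak p)=R_{\mathfrak p}/\mathfrak pR_{\mathfrak p}$ with $M\neq 0$.
   Context: Throughout, $R$ is a commutative Noetherian local ring and $\mathcal F$ is a Gabriel topology on $R$: a nonempty set of ideals of $R$ such that (1) if $\mathfrak a\in\mathcal F$ and $\mathfrak a\subseteq\mathfrak b$ then $\mathfrak b\in\mathcal F$; (2) if $\mathfrak a,\mathfrak b\in\mathcal F$ then $\mathfrak a\cap\mathfrak b\in\mathcal F$; (3) if $\mathfrak b$ is an ideal and there is $\mathfrak a\in\mathcal F$ with $(\mathfrak b:r)\in\mathcal F$ for all $r\in\mathfrak a$, then $\mathfrak b\in\mathcal F$. For an $R$-module $X$ and ideal $\mathfrak a$, $X[\mathfrak a]=\{x\in X:\mathfrak a x=0\}$. $X$ is $\mathcal F$-torsion-free if $X[\mathfrak a]=0$ for all $\mathfrak a\in\mathcal F$. $M$ is simple-$\mathcal F$-torsion-free if $M\neq0$, $M$ is $\mathcal F$-torsion-free, and for every submodule $0\neq U\subsetneq M$, $M/U$ is not $\mathcal F$-torsion-free. $\mathcal F^*$ denotes the set of maximal elements (under inclusion) of $\mathrm{Spec}(R)\setminus\mathcal F$. A module $M\neq0$ is prime if every $r\in R$ acts on $M$ either as zero or injectively. A module is uniform if it is nonzero and any two nonzero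 submodules intersect nontrivially. *)

theory Defs
  imports Main
begin

definition ring_ideal :: "'a::comm_ring_1 set \<Rightarrow> bool" where
  "ring_ideal I \<longleftrightarrow> 0 \<in> I \<and> (\<forall>x\<in>I. \<forall>y\<in>I. x + y \<in> I) \<and> (\<forall>r. \<forall>x\<in>I. r * x \<in> I)"

definition prime_ideal :: "'a::comm_ring_1 set \<Rightarrow> bool" where
  "prime_ideal P \<longleftrightarrow> ring_ideal P \<and> 1 \<notin> P \<and> (\<forall>a b. a * b \<in> P \<longrightarrow> a \<in> P \<or> b \<in> P)"

definition maximal_ideal :: "'a::comm_ring_1 set \<Rightarrow> bool" where
  "maximal_ideal m \<longleftrightarrow> ring_ideal m \<and> m \<noteq> UNIV \<and>
     (\<forall>J. ring_ideal J \<and> m \<subseteq> J \<longrightarrow> J = m \<or> J = UNIV)"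

definition noetherian_ring :: "'a::comm_ring_1 itself \<Rightarrow> bool" where
  "noetherian_ring _ \<longleftrightarrow>
     (\<forall>I :: nat \<Rightarrow> 'a set. (\<forall>n. ring_ideal (I n) \<and> I n \<subseteq> I (Suc n)) \<longrightarrow>
        (\<exists>N. \<forall>n\<ge>N. I n = I N))"

definition local_ring :: "'a::comm_ring_1 itself \<Rightarrow> bool" where
  "local_ring _ \<longleftrightarrow> (\<exists>!m :: 'a set. maximal_ideal m)"

definition colon_ideal :: "'a::comm_ring_1 set \<Rightarrow> 'a \<Rightarrow> 'a set" where
  "colon_ideal b r = {x. x * r \<in> b}"

definition gabriel_topology :: "'a::comm_ring_1 set set \<Rightarrow> bool" where
  "gabriel_topology F \<longleftrightarrow>
     F \<noteq> {} \<and> (\<forall>a\<in>F. ring_ideal a) \<and>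
     (\<forall>a b. a \<in> F \<and> ring_ideal b \<and> a \<subseteq> b \<longrightarrow> b \<in> F) \<and>
     (\<forall>a\<in>F. \<forall>b\<in>F. a \<inter> b \<in> F) \<and>
     (\<forall>b a. ring_ideal b \<and> a \<in> F \<and> (\<forall>r\<in>a. colon_ideal b r \<in> F) \<longrightarrow> b \<in> F)"

definition Fstar :: "'a::comm_ring_1 set set \<Rightarrow> 'a set set" where
  "Fstar F = {p. prime_ideal p \<and> p \<notin> F \<and>
                 (\<forall>q. prime_ideal q \<and> q \<notin> F \<and> p \<subseteq> q \<longrightarrow> q = p)}"

section \<open>Modules: the module is the whole type 'm with scalar action s\<close>

definition is_module :: "('a::comm_ring_1 \<Rightarrow> 'm::ab_group_add \<Rightarrow> 'm) \<Rightarrow> bool" where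
  "is_module s \<longleftrightarrow> (\<forall>a x y. s a (x + y) = s a x + s a y) \<and> (\<forall>a b x. s (a + b) x = s a x + s b x) \<and>
     (\<forall>a b x. s a (s b x) = s (a * b) x) \<and> (\<forall>x. s 1 x = x)"

definition submodule :: "('a::comm_ring_1 \<Rightarrow> 'm::ab_group_add \<Rightarrow> 'm) \<Rightarrow> 'm set \<Rightarrow> bool" where
  "submodule s U \<longleftrightarrow> 0 \<in> U \<and> (\<forall>x\<in>U. \<forall>y\<in>U. x + y \<in> U) \<and> (\<forall>c. \<forall>x\<in>U. s c x \<in> U)"

definition ann_sub :: "('a::comm_ring_1 \<Rightarrow> 'm::ab_group_add \<Rightarrow> 'm) \<Rightarrow> 'a set \<Rightarrow> 'm set" where
  "ann_sub s a = {x. \<forall>r\<in>a. s r x = 0}"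

definition F_torsion_free :: "('a::comm_ring_1 \<Rightarrow> 'm::ab_group_add \<Rightarrow> 'm) \<Rightarrow> 'a set set \<Rightarrow> bool" where
  "F_torsion_free s F \<longleftrightarrow> (\<forall>a\<in>F. ann_sub s a = {0})"

text \<open>The quotient M/U is F-torsion-free: (M/U)[a] = 0 for all a in F, i.e.
  every x with a x contained in U lies in U.\<close>
definition quot_F_torsion_free ::
  "('a::comm_ring_1 \<Rightarrow> 'm::ab_group_add \<Rightarrow> 'm) \<Rightarrow> 'a set set \<Rightarrow> 'm set \<Rightarrow> bool" where
  "quot_F_torsion_free s F U \<longleftrightarrow> (\<forall>a\<in>F. \<forall>x. (\<forall>r\<in>a. s r x \<in> U) \<longrightarrow> x \<in> U)"

definition simple_F_torsion_free ::
  "('a::comm_ring_1 \<Rightarrow> 'm::ab_group_add \<Rightarrow> 'm) \<Rightarrow> 'a set set \<Rightarrow> bool" where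
  "simple_F_torsion_free s F \<longleftrightarrow>
     (UNIV :: 'm set) \<noteq> {0} \<and> F_torsion_free s F \<and>
     (\<forall>U. submodule s U \<and> U \<noteq> {0} \<and> U \<noteq> UNIV \<longrightarrow> \<not> quot_F_torsion_free s F U)"

definition prime_module :: "('a::comm_ring_1 \<Rightarrow> 'm::ab_group_add \<Rightarrow> 'm) \<Rightarrow> bool" where
  "prime_module s \<longleftrightarrow> (UNIV :: 'm set) \<noteq> {0} \<and>
     (\<forall>r. (\<forall>x. s r x = 0) \<or> inj (s r))"

definition uniform_module :: "('a::comm_ring_1 \<Rightarrow> 'm::ab_group_add \<Rightarrow> 'm) \<Rightarrow> bool" where
  "uniform_module s \<longleftrightarrow> (UNIV :: 'm set) \<noteq> {0} \<and>
     (\<forall>U V. submodule s U \<and> submodule s V \<and> U \<noteq> {0} \<and> V \<noteq> {0}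
        \<longrightarrow> U \<inter> V \<noteq> {0})"

definition Ann :: "('a::comm_ring_1 \<Rightarrow> 'm::ab_group_add \<Rightarrow> 'm) \<Rightarrow> 'a set" where
  "Ann s = {r. \<forall>x. s r x = 0}"

section \<open>Residue field kappa(p) = R_p / p R_p, as classes of fractions r/t (t not in p)\<close>

text \<open>r/t and r'/t' have the same image in R_p/pR_p iff r t' - r' t \<in> p (p prime).\<close>
definition kappa_rel :: "'a::comm_ring_1 set \<Rightarrow> (('a \<times> 'a) \<times> ('a \<times> 'a)) set" where
  "kappa_rel p = {((r, t), (r', t')). t \<notin> p \<and> t' \<notin> p \<and> r * t' - r' * t \<in> p}"

definition kappa :: "'a::comm_ring_1 set \<Rightarrow> ('a \<times> 'a) set set" where
  "kappa p = {(r, t). t \<notin> p} // kappa_rel p"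

definition kappa_add :: "'a::comm_ring_1 set \<Rightarrow> ('a \<times> 'a) set \<Rightarrow> ('a \<times> 'a) set \<Rightarrow> ('a \<times> 'a) set" where
  "kappa_add p X Y = {z. \<exists>x\<in>X. \<exists>y\<in>Y.
      (z, (fst x * snd y + fst y * snd x, snd x * snd y)) \<in> kappa_rel p}"

definition kappa_scale :: "'a::comm_ring_1 set \<Rightarrow> 'a \<Rightarrow> ('a \<times> 'a) set \<Rightarrow> ('a \<times> 'a) set" where
  "kappa_scale p c X = {z. \<exists>x\<in>X. (z, (c * fst x, snd x)) \<in> kappa_rel p}"

definition kappa_mono ::
  "('a::comm_ring_1 \<Rightarrow> 'm::ab_group_add \<Rightarrow> 'm) \<Rightarrow> 'a set \<Rightarrow> ('m \<Rightarrow> ('a \<times> 'a) set) \<Rightarrow> bool" where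
  "kappa_mono s p f \<longleftrightarrow> (\<forall>x. f x \<in> kappa p) \<and>
     (\<forall>x y. f (x + y) = kappa_add p (f x) (f y)) \<and>
     (\<forall>c x. f (s c x) = kappa_scale p c (f x)) \<and> inj f"

end

theory Submission
  imports Defs
begin

text \<open>Let \<open>p = Ann M\<close>. If \<open>M\<close> is prime, \<open>p\<close> is prime and every \<open>r \<notin> p\<close> acts injectively; if \<open>M\<close> is
  moreover uniform, any \<open>x\<close> can be compared with a fixed \<open>m\<^sub>0 \<noteq> 0\<close> through \<open>t x = a m\<^sub>0\<close> with
  \<open>t \<notin> p\<close>, and \<open>x \<mapsto> a/t\<close> embeds \<open>M\<close> into \<open>\<kappa>(p)\<close>. Conversely, in a submodule of \<open>\<kappa>(p)\<close> the
  element \<open>r\<close> kills \<open>a/t\<close> iff \<open>r \<in> p\<close> or \<open>a \<in> p\<close>, and two nonzero elements have a common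
  nonzero multiple.

  If \<open>M\<close> is simple \<open>\<F>\<close>-torsion-free, the \<open>\<F>\<close>-saturation of a nonzero submodule \<open>U\<close> is a
  submodule with \<open>\<F>\<close>-torsion-free quotient, hence all of \<open>M\<close>; applied to kernels, to
  intersections and to \<open>q x\<close> for ideals \<open>q \<supset> Ann M\<close> this gives primeness, uniformity and
  \<open>Ann M \<in> \<F>\<^sup>*\<close>. Conversely, for \<open>x \<notin> U \<noteq> 0\<close> uniformity makes the conductor \<open>(U : x)\<close> strictly
  larger than \<open>Ann M\<close>, and by Noetherianity every ideal strictly above an element of \<open>\<F>\<^sup>*\<close>
  lies in \<open>\<F>\<close>: otherwise a maximal ideal outside \<open>\<F>\<close> above it would be a larger prime.\<close>

lemma ring_ideal_zero: "ring_ideal I \<Longrightarrow> 0 \<in> I"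
  by (simp add: ring_ideal_def)

lemma ring_ideal_add: "ring_ideal I \<Longrightarrow> x \<in> I \<Longrightarrow> y \<in> I \<Longrightarrow> x + y \<in> I"
  by (simp add: ring_ideal_def)

lemma ring_ideal_mult_left: "ring_ideal I \<Longrightarrow> x \<in> I \<Longrightarrow> r * x \<in> I"
  by (simp add: ring_ideal_def)

lemma ring_ideal_mult_right: "ring_ideal I \<Longrightarrow> x \<in> I \<Longrightarrow> x * r \<in> I"
  by (metis ring_ideal_mult_left mult.commute)

lemma ring_ideal_uminus: "ring_ideal I \<Longrightarrow> x \<in> I \<Longrightarrow> - x \<in> I"
  using ring_ideal_mult_left[of I x "- 1"] by simp

lemma ring_ideal_UNIV: "ring_ideal UNIV"
  by (simp add: ring_ideal_def)

lemma ring_ideal_colon_ideal: "ring_ideal b \<Longrightarrow> ring_ideal (colon_ideal b r)"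
  unfolding ring_ideal_def colon_ideal_def by (auto simp: distrib_right mult.assoc)

lemma ring_ideal_add_principal:
  assumes b: "ring_ideal b"
  shows "ring_ideal {\<beta> + t * x | \<beta> t. \<beta> \<in> b}"
  unfolding ring_ideal_def
proof (intro conjI ballI allI)
  have "0 + 0 * x \<in> {\<beta> + t * x | \<beta> t. \<beta> \<in> b}" using ring_ideal_zero[OF b] by blast
  then show "0 \<in> {\<beta> + t * x | \<beta> t. \<beta> \<in> b}" by simp
next
  fix u v assume "u \<in> {\<beta> + t * x | \<beta> t. \<beta> \<in> b}" "v \<in> {\<beta> + t * x | \<beta> t. \<beta> \<in> b}"
  then obtain \<beta> t \<beta>' t' where "u = \<beta> + t * x" "v = \<beta>' + t' * x" "\<beta> \<in> b" "\<beta>' \<in> b"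
    by blast
  then have "u + v = (\<beta> + \<beta>') + (t + t') * x" "\<beta> + \<beta>' \<in> b"
    using ring_ideal_add[OF b] by (auto simp: algebra_simps)
  then show "u + v \<in> {\<beta> + t * x | \<beta> t. \<beta> \<in> b}" by blast
next
  fix r u assume "u \<in> {\<beta> + t * x | \<beta> t. \<beta> \<in> b}"
  then obtain \<beta> t where "u = \<beta> + t * x" "\<beta> \<in> b" by blast
  then have "r * u = r * \<beta> + (r * t) * x" "r * \<beta> \<in> b"
    using ring_ideal_mult_left[OF b] by (auto simp: algebra_simps)
  then show "r * u \<in> {\<beta> + t * x | \<beta> t. \<beta> \<in> b}" by blast
qed

lemma prime_ideal_ring_ideal: "prime_ideal p \<Longrightarrow> ring_ideal p"
  by (simp add: prime_ideal_def)

lemma prime_ideal_one_notin: "prime_ideal p \<Longrightarrow> 1 \<notin> p"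
  by (simp add: prime_ideal_def)

lemma prime_ideal_mult_iff:
  assumes p: "prime_ideal p"
  shows "a * b \<in> p \<longleftrightarrow> a \<in> p \<or> b \<in> p"
proof
  show "a * b \<in> p \<Longrightarrow> a \<in> p \<or> b \<in> p" using p by (simp add: prime_ideal_def)
  show "a \<in> p \<or> b \<in> p \<Longrightarrow> a * b \<in> p"
    using ring_ideal_mult_left[OF prime_ideal_ring_ideal[OF p]]
      ring_ideal_mult_right[OF prime_ideal_ring_ideal[OF p]] by blast
qed

lemma prime_ideal_mult_notin: "prime_ideal p \<Longrightarrow> a \<notin> p \<Longrightarrow> b \<notin> p \<Longrightarrow> a * b \<notin> p"
  by (simp add: prime_ideal_mult_iff)

lemma gabriel_topology_UNIV: "gabriel_topology F \<Longrightarrow> UNIV \<in> F"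
  unfolding gabriel_topology_def using ring_ideal_UNIV by blast

lemma gabriel_topology_mono:
  "gabriel_topology F \<Longrightarrow> a \<in> F \<Longrightarrow> ring_ideal b \<Longrightarrow> a \<subseteq> b \<Longrightarrow> b \<in> F"
  unfolding gabriel_topology_def by blast

lemma gabriel_topology_Int: "gabriel_topology F \<Longrightarrow> a \<in> F \<Longrightarrow> b \<in> F \<Longrightarrow> a \<inter> b \<in> F"
  unfolding gabriel_topology_def by blast

lemma gabriel_topology_colon:
  "gabriel_topology F \<Longrightarrow> ring_ideal b \<Longrightarrow> a \<in> F \<Longrightarrow> (\<And>r. r \<in> a \<Longrightarrow> colon_ideal b r \<in> F)
    \<Longrightarrow> b \<in> F"
  unfolding gabriel_topology_def by blast

subsection \<open>Ideals strictly above \<open>\<F>\<^sup>*\<close>\<close>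

lemma noetherian_ring_maximal_element:
  assumes "noetherian_ring TYPE('a::comm_ring_1)"
    and "I0 \<in> S" and "\<And>I. I \<in> S \<Longrightarrow> ring_ideal (I :: 'a set)"
  shows "\<exists>M\<in>S. \<forall>J\<in>S. M \<subseteq> J \<longrightarrow> J = M"
proof (rule ccontr)
  assume "\<not> ?thesis"
  then have "\<forall>M\<in>S. \<exists>J. J \<in> S \<and> M \<subset> J" by blast
  then obtain g where g: "\<forall>M\<in>S. g M \<in> S \<and> M \<subset> g M" by (metis bchoice)
  define I where "I n = (g ^^ n) I0" for n
  have I_in: "I n \<in> S" for n
    by (induction n) (simp_all add: I_def assms(2) g)
  have I_step: "I n \<subset> I (Suc n)" for n
    using g I_in[of n] by (simp add: I_def)
  have chain: "\<forall>n. ring_ideal (I n) \<and> I n \<subseteq> I (Suc n)"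
    using I_in I_step assms(3) by (simp add: psubset_imp_subset)
  have "\<forall>J :: nat \<Rightarrow> 'a set. (\<forall>n. ring_ideal (J n) \<and> J n \<subseteq> J (Suc n))
      \<longrightarrow> (\<exists>N. \<forall>n\<ge>N. J n = J N)"
    using assms(1) unfolding noetherian_ring_def .
  then obtain N where "\<forall>n\<ge>N. I n = I N" using chain by blast
  then have "I (Suc N) = I N" using le_SucI[OF order.refl] by blast
  then show False using I_step[of N] by simp
qed

text \<open>The ideals \<open>b + R x\<close> and \<open>(b : x)\<close> strictly contain \<open>b\<close>, and \<open>(b : x) \<subseteq> (b : r)\<close> for every
  \<open>r \<in> b + R x\<close>; axiom (3) would then put \<open>b\<close> into \<open>F\<close>.\<close>
lemma gabriel_topology_maximal_nonmember_prime:
  assumes G: "gabriel_topology F" and b: "ring_ideal b" "b \<notin> F"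
    and maximal: "\<And>J. ring_ideal J \<Longrightarrow> b \<subset> J \<Longrightarrow> J \<in> F"
  shows "prime_ideal b"
proof -
  have "1 \<notin> b"
  proof
    assume "1 \<in> b"
    then have "b = UNIV" using ring_ideal_mult_left[OF b(1), of 1] by auto
    then show False using b(2) gabriel_topology_UNIV[OF G] by simp
  qed
  moreover have "x \<in> b \<or> y \<in> b" if xy: "x * y \<in> b" for x y
  proof (rule ccontr)
    assume "\<not> (x \<in> b \<or> y \<in> b)"
    then have x: "x \<notin> b" and y: "y \<notin> b" by auto
    define bx where "bx = {\<beta> + t * x | \<beta> t. \<beta> \<in> b}"
    have bx_ideal: "ring_ideal bx"
      unfolding bx_def by (rule ring_ideal_add_principal[OF b(1)])
    have "b \<subseteq> bx"
    proof
      fix z assume "z \<in> b"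
      then have "z + 0 * x \<in> bx" unfolding bx_def by blast
      then show "z \<in> bx" by simp
    qed
    moreover have "0 + 1 * x \<in> bx" unfolding bx_def using ring_ideal_zero[OF b(1)] by blast
    then have "x \<in> bx" by simp
    ultimately have "bx \<in> F" using maximal[OF bx_ideal] x by blast
    have "b \<subseteq> colon_ideal b x"
      unfolding colon_ideal_def using ring_ideal_mult_right[OF b(1)] by blast
    moreover have "y \<in> colon_ideal b x"
      unfolding colon_ideal_def using xy by (simp add: mult.commute)
    ultimately have colon_x: "colon_ideal b x \<in> F"
      using maximal[OF ring_ideal_colon_ideal[OF b(1)]] y by blast
    have "colon_ideal b r \<in> F" if "r \<in> bx" for r
    proof -
      obtain \<beta> t where r: "r = \<beta> + t * x" "\<beta> \<in> b" using \<open>r \<in> bx\<close> unfolding bx_def by blast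
      have "colon_ideal b x \<subseteq> colon_ideal b r"
      proof
        fix z assume "z \<in> colon_ideal b x"
        then have "z * x \<in> b" by (simp add: colon_ideal_def)
        then have "z * \<beta> + t * (z * x) \<in> b"
          using r(2) ring_ideal_add[OF b(1)] ring_ideal_mult_left[OF b(1)] ring_ideal_mult_right[OF b(1)]
          by blast
        then show "z \<in> colon_ideal b r"
          using r(1) by (simp add: colon_ideal_def algebra_simps)
      qed
      then show ?thesis
        using gabriel_topology_mono[OF G colon_x ring_ideal_colon_ideal[OF b(1)]] by blast
    qed
    then have "b \<in> F" using gabriel_topology_colon[OF G b(1) \<open>bx \<in> F\<close>] by blast
    then show False using b(2) by simp
  qed
  ultimately show ?thesis using b(1) unfolding prime_ideal_def by blast
qed

lemma Fstar_psubset_mem: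
  assumes N: "noetherian_ring TYPE('a::comm_ring_1)" and G: "gabriel_topology F"
    and p: "p \<in> Fstar F" and c: "ring_ideal (c :: 'a set)" "p \<subset> c"
  shows "c \<in> F"
proof (rule ccontr)
  assume "c \<notin> F"
  define S where "S = {J. ring_ideal J \<and> c \<subseteq> J \<and> J \<notin> F}"
  have "c \<in> S" using c(1) \<open>c \<notin> F\<close> by (simp add: S_def)
  moreover have "\<And>J. J \<in> S \<Longrightarrow> ring_ideal J" by (simp add: S_def)
  ultimately obtain b where b: "b \<in> S" and b_max: "\<forall>J\<in>S. b \<subseteq> J \<longrightarrow> J = b"
    using noetherian_ring_maximal_element[OF N] by blast
  have "prime_ideal b"
  proof (rule gabriel_topology_maximal_nonmember_prime[OF G])
    show "ring_ideal b" "b \<notin> F" using b by (simp_all add: S_def)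
    show "J \<in> F" if "ring_ideal J" "b \<subset> J" for J
      using b b_max that unfolding S_def by blast
  qed
  then have "b = p" using p b c(2) unfolding Fstar_def S_def by blast
  then show False using b c(2) by (auto simp: S_def)
qed

subsection \<open>Fractions in \<open>\<kappa>(p)\<close>\<close>

lemma equiv_class_collect_respects:
  assumes r: "equiv A r" and u: "u \<in> A"
    and g: "\<And>x. (u, x) \<in> r \<Longrightarrow> (g u, g x) \<in> r"
  shows "{z. \<exists>x\<in>r `` {u}. (z, g x) \<in> r} = r `` {g u}"
proof (intro set_eqI iffI)
  have sym: "sym r" and trans: "trans r" using r by (simp_all add: equiv_def)
  fix z assume "z \<in> {z. \<exists>x\<in>r `` {u}. (z, g x) \<in> r}"
  then obtain x where "(u, x) \<in> r" "(z, g x) \<in> r" by blast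
  then show "z \<in> r `` {g u}" using g symD[OF sym] transD[OF trans] by blast
next
  fix z assume "z \<in> r `` {g u}"
  moreover have "(u, u) \<in> r" using r u by (simp add: equiv_def refl_on_def)
  ultimately show "z \<in> {z. \<exists>x\<in>r `` {u}. (z, g x) \<in> r}"
    using r by (auto simp: equiv_def dest: symD)
qed

lemma equiv_class_collect_respects2:
  assumes r: "equiv A r" and u: "u \<in> A" and v: "v \<in> A"
    and g: "\<And>x y. (u, x) \<in> r \<Longrightarrow> (v, y) \<in> r \<Longrightarrow> (g u v, g x y) \<in> r"
  shows "{z. \<exists>x\<in>r `` {u}. \<exists>y\<in>r `` {v}. (z, g x y) \<in> r} = r `` {g u v}"
proof (intro set_eqI iffI)
  have sym: "sym r" and trans: "trans r" using r by (simp_all add: equiv_def)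
  fix z assume "z \<in> {z. \<exists>x\<in>r `` {u}. \<exists>y\<in>r `` {v}. (z, g x y) \<in> r}"
  then obtain x y where "(u, x) \<in> r" "(v, y) \<in> r" "(z, g x y) \<in> r" by blast
  then show "z \<in> r `` {g u v}" using g symD[OF sym] transD[OF trans] by blast
next
  fix z assume "z \<in> r `` {g u v}"
  moreover have "(u, u) \<in> r" "(v, v) \<in> r" using r u v by (simp_all add: equiv_def refl_on_def)
  ultimately show "z \<in> {z. \<exists>x\<in>r `` {u}. \<exists>y\<in>r `` {v}. (z, g x y) \<in> r}"
    using r by (auto simp: equiv_def dest: symD)
qed

definition kappa_class :: "'a::comm_ring_1 set \<Rightarrow> 'a \<Rightarrow> 'a \<Rightarrow> ('a \<times> 'a) set" where
  "kappa_class p a t = kappa_rel p `` {(a, t)}"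

lemma kappa_rel_iff:
  "((r, t), (r', t')) \<in> kappa_rel p \<longleftrightarrow> t \<notin> p \<and> t' \<notin> p \<and> r * t' - r' * t \<in> p"
  by (simp add: kappa_rel_def)

lemma equiv_kappa_rel:
  assumes p: "prime_ideal p"
  shows "equiv {(r, t). t \<notin> p} (kappa_rel p)"
proof (rule equivI)
  have I: "ring_ideal p" using p by (rule prime_ideal_ring_ideal)
  show "kappa_rel p \<subseteq> {(r, t). t \<notin> p} \<times> {(r, t). t \<notin> p}"
    by (auto simp: kappa_rel_def)
  show "refl_on {(r, t). t \<notin> p} (kappa_rel p)"
    using ring_ideal_zero[OF I] by (auto simp: refl_on_def kappa_rel_def)
  show "sym (kappa_rel p)"
  proof (rule symI)
    fix x y assume xy: "(x, y) \<in> kappa_rel p"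
    obtain a b c d where xy_eq: "x = (a, b)" "y = (c, d)" by (metis prod.exhaust)
    have "- (a * d - c * b) \<in> p"
      using xy xy_eq ring_ideal_uminus[OF I, of "a * d - c * b"] by (simp add: kappa_rel_iff)
    then show "(y, x) \<in> kappa_rel p" using xy xy_eq by (simp add: kappa_rel_iff)
  qed
  show "trans (kappa_rel p)"
  proof (rule transI)
    fix x y z assume xy: "(x, y) \<in> kappa_rel p" and yz: "(y, z) \<in> kappa_rel p"
    obtain a b c d e f where xyz: "x = (a, b)" "y = (c, d)" "z = (e, f)" by (metis prod.exhaust)
    have h: "a * d - c * b \<in> p" "c * f - e * d \<in> p" "b \<notin> p" "d \<notin> p" "f \<notin> p"
      using xy yz xyz by (auto simp: kappa_rel_iff)
    have "f * (a * d - c * b) + b * (c * f - e * d) \<in> p"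
      using I h(1,2) by (simp add: ring_ideal_add ring_ideal_mult_left)
    moreover have "f * (a * d - c * b) + b * (c * f - e * d) = d * (a * f - e * b)"
      by (simp add: algebra_simps)
    ultimately have "d * (a * f - e * b) \<in> p" by simp
    then have "a * f - e * b \<in> p" using h(4) by (simp add: prime_ideal_mult_iff[OF p])
    then show "(x, z) \<in> kappa_rel p" using xyz h by (simp add: kappa_rel_iff)
  qed
qed

lemma kappa_class_eq_iff:
  assumes "prime_ideal p" and "t \<notin> p" and "t' \<notin> p"
  shows "kappa_class p a t = kappa_class p a' t' \<longleftrightarrow> a * t' - a' * t \<in> p"
  unfolding kappa_class_def
  using eq_equiv_class_iff[OF equiv_kappa_rel[OF assms(1)], of "(a, t)" "(a', t')"] assms(2,3)
  by (simp add: kappa_rel_iff)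

lemma kappa_class_eq_zero_iff:
  assumes "prime_ideal p" and "t \<notin> p"
  shows "kappa_class p a t = kappa_class p 0 1 \<longleftrightarrow> a \<in> p"
  using kappa_class_eq_iff[OF assms(1,2) prime_ideal_one_notin[OF assms(1)], of a 0] by simp

lemma kappa_class_in_kappa: "t \<notin> p \<Longrightarrow> kappa_class p a t \<in> kappa p"
  unfolding kappa_class_def kappa_def by (rule quotientI) simp

lemma kappa_obtain_class:
  assumes "X \<in> kappa p"
  obtains a t where "t \<notin> p" and "X = kappa_class p a t"
proof -
  obtain x where "x \<in> {(r, t). t \<notin> p}" "X = kappa_rel p `` {x}"
    using assms unfolding kappa_def by (rule quotientE)
  then show thesis using that[of "snd x" "fst x"] by (auto simp: kappa_class_def)
qed

lemma kappa_scale_class: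
  assumes p: "prime_ideal p" and t: "t \<notin> p"
  shows "kappa_scale p c (kappa_class p a t) = kappa_class p (c * a) t"
proof -
  have respects: "((c * a, t), (c * fst x, snd x)) \<in> kappa_rel p"
    if "((a, t), x) \<in> kappa_rel p" for x
  proof -
    have "c * a * snd x - c * fst x * t = c * (a * snd x - fst x * t)"
      by (simp add: algebra_simps)
    then show ?thesis
      using that ring_ideal_mult_left[OF prime_ideal_ring_ideal[OF p]]
      by (cases x) (simp add: kappa_rel_iff)
  qed
  have "{z. \<exists>x\<in>kappa_rel p `` {(a, t)}. (z, (\<lambda>x. (c * fst x, snd x)) x) \<in> kappa_rel p}
      = kappa_rel p `` {(\<lambda>x. (c * fst x, snd x)) (a, t)}"
    by (rule equiv_class_collect_respects[OF equiv_kappa_rel[OF p]]) (use t respects in simp_all)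
  then show ?thesis by (simp add: kappa_scale_def kappa_class_def)
qed

lemma kappa_add_class:
  assumes p: "prime_ideal p" and t: "t \<notin> p" "t' \<notin> p"
  shows "kappa_add p (kappa_class p a t) (kappa_class p b t')
    = kappa_class p (a * t' + b * t) (t * t')"
proof -
  let ?g = "\<lambda>x y. (fst x * snd y + fst y * snd x, snd x * snd y)"
  have respects: "((a * t' + b * t, t * t'), ?g x y) \<in> kappa_rel p"
    if "((a, t), x) \<in> kappa_rel p" "((b, t'), y) \<in> kappa_rel p" for x y
  proof -
    obtain x1 x2 y1 y2 where xy: "x = (x1, x2)" "y = (y1, y2)" by (metis prod.exhaust)
    have h: "a * x2 - x1 * t \<in> p" "b * y2 - y1 * t' \<in> p" "x2 \<notin> p" "y2 \<notin> p"
      using that xy by (auto simp: kappa_rel_iff)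
    have I: "ring_ideal p" using p by (rule prime_ideal_ring_ideal)
    have "y2 * t' * (a * x2 - x1 * t) + x2 * t * (b * y2 - y1 * t') \<in> p"
      using I h(1,2) by (simp add: ring_ideal_add ring_ideal_mult_left)
    moreover have "y2 * t' * (a * x2 - x1 * t) + x2 * t * (b * y2 - y1 * t')
        = (a * t' + b * t) * (x2 * y2) - (x1 * y2 + y1 * x2) * (t * t')"
      by (simp add: algebra_simps)
    ultimately show ?thesis
      using xy h t prime_ideal_mult_notin[OF p] by (simp add: kappa_rel_iff)
  qed
  have "{z. \<exists>x\<in>kappa_rel p `` {(a, t)}. \<exists>y\<in>kappa_rel p `` {(b, t')}. (z, ?g x y) \<in> kappa_rel p}
      = kappa_rel p `` {?g (a, t) (b, t')}"
    by (rule equiv_class_collect_respects2[OF equiv_kappa_rel[OF p]]) (use t respects in simp_all)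
  then show ?thesis by (simp add: kappa_add_def kappa_class_def)
qed

locale module_action =
  fixes s :: "'a::comm_ring_1 \<Rightarrow> 'm::ab_group_add \<Rightarrow> 'm"
  assumes is_module: "is_module s"
begin

lemma scale_add_right: "s a (x + y) = s a x + s a y"
  using is_module by (simp add: is_module_def)

lemma scale_add_left: "s (a + b) x = s a x + s b x"
  using is_module by (simp add: is_module_def)

lemma scale_scale: "s a (s b x) = s (a * b) x"
  using is_module by (simp add: is_module_def)

lemma scale_one: "s 1 x = x"
  using is_module by (simp add: is_module_def)

lemma scale_zero_right: "s a 0 = 0"
  using scale_add_right[of a 0 0] by simp

lemma scale_zero_left: "s 0 x = 0"
  using scale_add_left[of 0 0 x] by simp

lemma scale_diff_right: "s a (x - y) = s a x - s a y"
  using scale_add_right[of a "x - y" y] by (simp add: eq_diff_eq)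

lemma scale_diff_left: "s (a - b) x = s a x - s b x"
  using scale_add_left[of "a - b" b x] by (simp add: eq_diff_eq)

lemma scale_commute: "s a (s b x) = s b (s a x)"
  by (simp add: scale_scale mult.commute)

lemma submodule_zero: "submodule s U \<Longrightarrow> 0 \<in> U"
  by (simp add: submodule_def)

lemma submodule_scale: "submodule s U \<Longrightarrow> x \<in> U \<Longrightarrow> s c x \<in> U"
  by (simp add: submodule_def)

lemma submodule_image_ideal:
  assumes q: "ring_ideal q"
  shows "submodule s ((\<lambda>t. s t x) ` q)"
  unfolding submodule_def
proof (intro conjI ballI allI)
  show "0 \<in> (\<lambda>t. s t x) ` q"
    using ring_ideal_zero[OF q] by (force simp: scale_zero_left)
next
  fix u v assume "u \<in> (\<lambda>t. s t x) ` q" "v \<in> (\<lambda>t. s t x) ` q"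
  then obtain a b where "u = s a x" "v = s b x" "a \<in> q" "b \<in> q" by blast
  then show "u + v \<in> (\<lambda>t. s t x) ` q"
    using ring_ideal_add[OF q] by (force simp: scale_add_left[symmetric])
next
  fix c u assume "u \<in> (\<lambda>t. s t x) ` q"
  then obtain a where "u = s a x" "a \<in> q" by blast
  then show "s c u \<in> (\<lambda>t. s t x) ` q"
    using ring_ideal_mult_left[OF q] by (force simp: scale_scale)
qed

lemma submodule_cyclic: "submodule s (range (\<lambda>t. s t x))"
  using submodule_image_ideal[OF ring_ideal_UNIV] .

lemma mem_cyclic_self: "x \<in> range (\<lambda>t. s t x)"
  using scale_one[of x] by (metis rangeI)

lemma submodule_kernel: "submodule s {x. s r x = 0}"
  unfolding submodule_def
  by (simp add: scale_zero_right scale_add_right scale_commute[of r])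

lemma ring_ideal_conductor:
  assumes U: "submodule s U"
  shows "ring_ideal {t. s t x \<in> U}"
  using U unfolding ring_ideal_def submodule_def
  by (simp add: scale_zero_left scale_add_left scale_scale[symmetric])

lemma ring_ideal_Ann: "ring_ideal (Ann s)"
  unfolding ring_ideal_def Ann_def
  by (simp add: scale_zero_left scale_add_left scale_scale[symmetric] scale_zero_right)

lemma inj_scale_iff: "inj (s r) \<longleftrightarrow> (\<forall>x. s r x = 0 \<longrightarrow> x = 0)"
proof
  assume "inj (s r)"
  then show "\<forall>x. s r x = 0 \<longrightarrow> x = 0" using scale_zero_right by (metis injD)
next
  assume "\<forall>x. s r x = 0 \<longrightarrow> x = 0"
  then show "inj (s r)" by (intro injI) (metis scale_diff_right eq_iff_diff_eq_0)
qed

lemma prime_moduleI: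
  assumes "(UNIV :: 'm set) \<noteq> {0}"
    and "\<And>r. (\<forall>x. s r x = 0) \<or> (\<forall>x. s r x = 0 \<longrightarrow> x = 0)"
  shows "prime_module s"
  using assms by (simp add: prime_module_def inj_scale_iff)

lemma prime_module_inj_scale: "prime_module s \<Longrightarrow> r \<notin> Ann s \<Longrightarrow> inj (s r)"
  unfolding prime_module_def Ann_def by blast

lemma prime_module_mem_Ann:
  "prime_module s \<Longrightarrow> s r x = 0 \<Longrightarrow> x \<noteq> 0 \<Longrightarrow> r \<in> Ann s"
  using prime_module_inj_scale inj_scale_iff by blast

lemma prime_ideal_Ann:
  assumes pm: "prime_module s"
  shows "prime_ideal (Ann s)"
proof -
  obtain x :: 'm where "x \<noteq> 0" using pm unfolding prime_module_def by auto
  then have "1 \<notin> Ann s" by (simp add: Ann_def scale_one exI[of _ x])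
  moreover have "a \<in> Ann s \<or> b \<in> Ann s" if "a * b \<in> Ann s" for a b
  proof (rule disjCI)
    assume "b \<notin> Ann s"
    then obtain y where "s b y \<noteq> 0" unfolding Ann_def by auto
    moreover have "s a (s b y) = 0" using that by (simp add: Ann_def scale_scale)
    ultimately show "a \<in> Ann s" using prime_module_mem_Ann[OF pm] by blast
  qed
  ultimately show ?thesis unfolding prime_ideal_def using ring_ideal_Ann by blast
qed

lemma uniform_module_cyclic_Int:
  assumes "uniform_module s" and "x \<noteq> 0" and "submodule s V" and "V \<noteq> {0}"
  obtains t where "s t x \<in> V" and "s t x \<noteq> 0"
proof -
  have "range (\<lambda>t. s t x) \<noteq> {0}" using mem_cyclic_self[of x] assms(2) by blast
  then have "range (\<lambda>t. s t x) \<inter> V \<noteq> {0}"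
    using assms(1,3,4) submodule_cyclic unfolding uniform_module_def by blast
  moreover have "0 \<in> range (\<lambda>t. s t x) \<inter> V"
    using submodule_zero[OF submodule_cyclic] submodule_zero[OF assms(3)] by blast
  ultimately show thesis using that by blast
qed

lemma F_torsion_free_iff:
  "F_torsion_free s F \<longleftrightarrow> (\<forall>a\<in>F. \<forall>x. (\<forall>t\<in>a. s t x = 0) \<longrightarrow> x = 0)"
  unfolding F_torsion_free_def ann_sub_def by (auto simp: scale_zero_right)

lemma quot_F_torsion_freeD:
  "quot_F_torsion_free s F U \<Longrightarrow> a \<in> F \<Longrightarrow> (\<And>r. r \<in> a \<Longrightarrow> s r x \<in> U) \<Longrightarrow> x \<in> U"
  unfolding quot_F_torsion_free_def by blast

subsection \<open>\<open>\<F>\<close>-saturation\<close>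

definition F_saturation :: "'a set set \<Rightarrow> 'm set \<Rightarrow> 'm set" where
  "F_saturation F U = {x. \<exists>a\<in>F. \<forall>t\<in>a. s t x \<in> U}"

lemma F_saturation_superset:
  assumes "gabriel_topology F" and "submodule s U"
  shows "U \<subseteq> F_saturation F U"
  using gabriel_topology_UNIV[OF assms(1)] submodule_scale[OF assms(2)]
  unfolding F_saturation_def by blast

lemma submodule_F_saturation:
  assumes G: "gabriel_topology F" and U: "submodule s U"
  shows "submodule s (F_saturation F U)"
  unfolding submodule_def
proof (intro conjI ballI allI)
  show "0 \<in> F_saturation F U"
    using F_saturation_superset[OF G U] submodule_zero[OF U] by blast
next
  fix x y assume "x \<in> F_saturation F U" "y \<in> F_saturation F U"
  then obtain a b where ab: "a \<in> F" "\<forall>t\<in>a. s t x \<in> U" "b \<in> F" "\<forall>t\<in>b. s t y \<in> U"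
    unfolding F_saturation_def by blast
  have "\<forall>t\<in>a \<inter> b. s t (x + y) \<in> U"
    using ab(2,4) U by (simp add: scale_add_right submodule_def)
  moreover have "a \<inter> b \<in> F" using gabriel_topology_Int[OF G ab(1,3)] .
  ultimately show "x + y \<in> F_saturation F U" unfolding F_saturation_def by blast
next
  fix c x assume "x \<in> F_saturation F U"
  then obtain a where a: "a \<in> F" "\<forall>t\<in>a. s t x \<in> U" unfolding F_saturation_def by blast
  have "s t (s c x) \<in> U" if "t \<in> a" for t
    using submodule_scale[OF U, of "s t x" c] a(2) that by (simp add: scale_commute[of t c])
  then show "s c x \<in> F_saturation F U" using a(1) unfolding F_saturation_def by blast
qed

text \<open>Axiom (3) of a Gabriel topology, applied to the conductor \<open>(U : x)\<close>.\<close>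
lemma quot_F_torsion_free_F_saturation:
  assumes G: "gabriel_topology F" and U: "submodule s U"
  shows "quot_F_torsion_free s F (F_saturation F U)"
  unfolding quot_F_torsion_free_def
proof (intro ballI allI impI)
  fix a x assume a: "a \<in> F" and ax: "\<forall>r\<in>a. s r x \<in> F_saturation F U"
  let ?c = "{t. s t x \<in> U}"
  have c: "ring_ideal ?c" by (rule ring_ideal_conductor[OF U])
  have "colon_ideal ?c r \<in> F" if "r \<in> a" for r
  proof -
    obtain b where b: "b \<in> F" "\<forall>t\<in>b. s t (s r x) \<in> U"
      using ax \<open>r \<in> a\<close> unfolding F_saturation_def by blast
    then have "b \<subseteq> colon_ideal ?c r" by (auto simp: colon_ideal_def scale_scale)
    then show ?thesis using gabriel_topology_mono[OF G b(1) ring_ideal_colon_ideal[OF c]] by blast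
  qed
  then have "?c \<in> F" using gabriel_topology_colon[OF G c a] by blast
  then show "x \<in> F_saturation F U" unfolding F_saturation_def by (intro CollectI bexI) simp_all
qed

lemma F_saturation_eq_UNIV:
  assumes G: "gabriel_topology F" and simple: "simple_F_torsion_free s F"
    and U: "submodule s U" "U \<noteq> {0}"
  shows "F_saturation F U = UNIV"
proof (rule ccontr)
  assume "F_saturation F U \<noteq> UNIV"
  moreover have "F_saturation F U \<noteq> {0}"
    using F_saturation_superset[OF G U(1)] U submodule_zero[OF U(1)] by blast
  ultimately show False
    using simple submodule_F_saturation[OF G U(1)] quot_F_torsion_free_F_saturation[OF G U(1)]
    unfolding simple_F_torsion_free_def by blast
qed

lemma simple_F_torsion_free_prime_module:
  assumes simple: "simple_F_torsion_free s F"
  shows "prime_module s"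
proof (rule prime_moduleI)
  show nontrivial: "(UNIV :: 'm set) \<noteq> {0}"
    using simple by (simp add: simple_F_torsion_free_def)
  fix r
  have "quot_F_torsion_free s F {x. s r x = 0}"
    unfolding quot_F_torsion_free_def
  proof (intro ballI allI impI)
    fix a x assume a: "a \<in> F" and ax: "\<forall>t\<in>a. s t x \<in> {x. s r x = 0}"
    then have "\<forall>t\<in>a. s t (s r x) = 0" by (simp add: scale_commute)
    then have "s r x = 0"
      using simple a unfolding simple_F_torsion_free_def F_torsion_free_iff by blast
    then show "x \<in> {x. s r x = 0}" by simp
  qed
  then have "{x. s r x = 0} = {0} \<or> {x. s r x = 0} = UNIV"
    using simple submodule_kernel unfolding simple_F_torsion_free_def by blast
  then show "(\<forall>x. s r x = 0) \<or> (\<forall>x. s r x = 0 \<longrightarrow> x = 0)" by blast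
qed

lemma simple_F_torsion_free_uniform_module:
  assumes G: "gabriel_topology F" and simple: "simple_F_torsion_free s F"
  shows "uniform_module s"
  unfolding uniform_module_def
proof (intro conjI allI impI)
  show "(UNIV :: 'm set) \<noteq> {0}" using simple by (simp add: simple_F_torsion_free_def)
  fix U V assume UV: "submodule s U \<and> submodule s V \<and> U \<noteq> {0} \<and> V \<noteq> {0}"
  then obtain v where v: "v \<in> V" "v \<noteq> 0" using submodule_zero by blast
  have "v \<in> F_saturation F U" using F_saturation_eq_UNIV[OF G simple] UV by blast
  then obtain a where a: "a \<in> F" "\<forall>t\<in>a. s t v \<in> U" unfolding F_saturation_def by blast
  have "\<forall>t\<in>a. s t v \<in> U \<inter> V" using a(2) UV v(1) submodule_scale by blast
  moreover have "\<not> (\<forall>t\<in>a. s t v = 0)"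
    using simple a(1) v(2) unfolding simple_F_torsion_free_def F_torsion_free_iff by blast
  ultimately show "U \<inter> V \<noteq> {0}" by blast
qed

text \<open>For a prime \<open>q \<supset> Ann M\<close> outside \<open>\<F>\<close>, the submodule \<open>q x\<close> is nonzero, so \<open>x\<close> lies in
  its saturation; this forces some ideal of \<open>\<F>\<close> into \<open>q + Ann M = q\<close>.\<close>
lemma simple_F_torsion_free_Ann_Fstar:
  assumes G: "gabriel_topology F" and simple: "simple_F_torsion_free s F"
  shows "Ann s \<in> Fstar F"
proof -
  have pm: "prime_module s" using simple by (rule simple_F_torsion_free_prime_module)
  obtain x :: 'm where x: "x \<noteq> 0" using simple unfolding simple_F_torsion_free_def by blast
  have "Ann s \<notin> F"
  proof
    assume "Ann s \<in> F"
    moreover have "\<forall>t\<in>Ann s. s t x = 0" by (simp add: Ann_def)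
    ultimately show False
      using simple x unfolding simple_F_torsion_free_def F_torsion_free_iff by blast
  qed
  moreover have "q = Ann s" if q: "prime_ideal q" "q \<notin> F" "Ann s \<subseteq> q" for q
  proof (rule ccontr)
    assume "q \<noteq> Ann s"
    then obtain r where r: "r \<in> q" "r \<notin> Ann s" using q(3) by blast
    have qi: "ring_ideal q" using q(1) by (rule prime_ideal_ring_ideal)
    let ?U = "(\<lambda>t. s t x) ` q"
    have "s r x \<noteq> 0" using prime_module_mem_Ann[OF pm _ x] r(2) by blast
    then have "?U \<noteq> {0}" using r(1) by blast
    then have "x \<in> F_saturation F ?U"
      using F_saturation_eq_UNIV[OF G simple submodule_image_ideal[OF qi]] by blast
    then obtain a where a: "a \<in> F" "\<forall>t\<in>a. s t x \<in> ?U" unfolding F_saturation_def by blast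
    have "a \<subseteq> q"
    proof
      fix t assume "t \<in> a"
      then obtain u where u: "u \<in> q" "s t x = s u x" using a(2) by auto
      then have "t - u \<in> Ann s" using prime_module_mem_Ann[OF pm _ x] by (simp add: scale_diff_left)
      then have "(t - u) + u \<in> q" using q(3) u(1) ring_ideal_add[OF qi] by blast
      then show "t \<in> q" by simp
    qed
    then have "q \<in> F" using gabriel_topology_mono[OF G a(1) qi] by blast
    then show False using q(2) by simp
  qed
  ultimately show ?thesis
    unfolding Fstar_def using prime_ideal_Ann[OF pm] by blast
qed

lemma prime_module_F_torsion_free:
  assumes G: "gabriel_topology F" and pm: "prime_module s" and A: "Ann s \<notin> F"
  shows "F_torsion_free s F"
  unfolding F_torsion_free_iff
proof (intro ballI allI impI)
  fix a x assume a: "a \<in> F" "\<forall>t\<in>a. s t x = 0"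
  show "x = 0"
  proof (rule ccontr)
    assume "x \<noteq> 0"
    then have "a \<subseteq> Ann s" using prime_module_mem_Ann[OF pm] a(2) by blast
    then show False using gabriel_topology_mono[OF G a(1) ring_ideal_Ann] A by blast
  qed
qed

text \<open>For \<open>x \<notin> U\<close>, uniformity gives \<open>t x \<in> U - {0}\<close>, so the conductor \<open>(U : x)\<close> strictly
  contains \<open>Ann M\<close> and therefore lies in \<open>\<F>\<close>.\<close>
lemma Fstar_Ann_not_quot_F_torsion_free:
  assumes N: "noetherian_ring TYPE('a)" and G: "gabriel_topology F"
    and pm: "prime_module s" and um: "uniform_module s" and A: "Ann s \<in> Fstar F"
    and U: "submodule s U" "U \<noteq> {0}" "U \<noteq> UNIV"
  shows "\<not> quot_F_torsion_free s F U"
proof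
  assume quot: "quot_F_torsion_free s F U"
  obtain x where x: "x \<notin> U" using U(3) by auto
  then have "x \<noteq> 0" using submodule_zero[OF U(1)] by blast
  then obtain t where t: "s t x \<in> U" "s t x \<noteq> 0"
    using uniform_module_cyclic_Int[OF um _ U(1,2)] by blast
  let ?c = "{t. s t x \<in> U}"
  have "Ann s \<subseteq> ?c" using submodule_zero[OF U(1)] by (simp add: Ann_def subset_iff)
  moreover have "t \<in> ?c" "t \<notin> Ann s" using t by (auto simp: Ann_def)
  ultimately have "Ann s \<subset> ?c" by blast
  then have "?c \<in> F" using Fstar_psubset_mem[OF N G A ring_ideal_conductor[OF U(1)]] by blast
  then have "x \<in> U" by (rule quot_F_torsion_freeD[OF quot]) simp
  then show False using x by simp
qed

lemma Fstar_Ann_simple_F_torsion_free: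
  assumes N: "noetherian_ring TYPE('a)" and G: "gabriel_topology F"
    and pm: "prime_module s" and um: "uniform_module s" and A: "Ann s \<in> Fstar F"
  shows "simple_F_torsion_free s F"
proof -
  have "Ann s \<notin> F" using A by (simp add: Fstar_def)
  then show ?thesis
    unfolding simple_F_torsion_free_def
    using pm prime_module_F_torsion_free[OF G pm] Fstar_Ann_not_quot_F_torsion_free[OF N G pm um A]
    by (simp add: prime_module_def)
qed

subsection \<open>Submodules of \<open>\<kappa>(p)\<close>\<close>

context
  fixes p :: "'a set" and f :: "'m \<Rightarrow> ('a \<times> 'a) set"
  assumes p: "prime_ideal p" and f: "kappa_mono s p f"
begin

lemma kappa_mono_obtain_class:
  obtains a t where "t \<notin> p" and "f x = kappa_class p a t"
  using f kappa_obtain_class unfolding kappa_mono_def by metis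

lemma kappa_mono_scale_class:
  "t \<notin> p \<Longrightarrow> f x = kappa_class p a t \<Longrightarrow> f (s c x) = kappa_class p (c * a) t"
  using f kappa_scale_class[OF p] unfolding kappa_mono_def by simp

lemma kappa_mono_inj: "inj f"
  using f by (simp add: kappa_mono_def)

lemma kappa_mono_zero: "f 0 = kappa_class p 0 1"
proof -
  obtain a t where at: "t \<notin> p" "f 0 = kappa_class p a t" by (rule kappa_mono_obtain_class)
  have "f 0 = f (s 0 0)" by (simp add: scale_zero_right)
  also have "\<dots> = kappa_class p (0 * a) t" using kappa_mono_scale_class[OF at] .
  also have "\<dots> = kappa_class p 0 1"
    using kappa_class_eq_zero_iff[OF p at(1)] ring_ideal_zero[OF prime_ideal_ring_ideal[OF p]] by simp
  finally show ?thesis .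
qed

lemma kappa_mono_eq_zero_iff:
  assumes t: "t \<notin> p" and fx: "f x = kappa_class p a t"
  shows "x = 0 \<longleftrightarrow> a \<in> p"
proof -
  have "x = 0 \<longleftrightarrow> f x = f 0" using kappa_mono_inj by (auto simp: inj_eq)
  also have "\<dots> \<longleftrightarrow> kappa_class p a t = kappa_class p 0 1" using fx kappa_mono_zero by simp
  also have "\<dots> \<longleftrightarrow> a \<in> p" by (rule kappa_class_eq_zero_iff[OF p t])
  finally show ?thesis .
qed

lemma kappa_mono_scale_eq_zero_iff: "s r x = 0 \<longleftrightarrow> r \<in> p \<or> x = 0"
proof -
  obtain a t where at: "t \<notin> p" "f x = kappa_class p a t" by (rule kappa_mono_obtain_class)
  have "s r x = 0 \<longleftrightarrow> r * a \<in> p"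
    using kappa_mono_eq_zero_iff[OF at(1) kappa_mono_scale_class[OF at]] .
  also have "\<dots> \<longleftrightarrow> r \<in> p \<or> a \<in> p" by (rule prime_ideal_mult_iff[OF p])
  also have "\<dots> \<longleftrightarrow> r \<in> p \<or> x = 0" using kappa_mono_eq_zero_iff[OF at] by blast
  finally show ?thesis .
qed

lemma kappa_mono_Ann: "(UNIV :: 'm set) \<noteq> {0} \<Longrightarrow> Ann s = p"
  using kappa_mono_scale_eq_zero_iff unfolding Ann_def by blast

lemma kappa_mono_prime_module: "(UNIV :: 'm set) \<noteq> {0} \<Longrightarrow> prime_module s"
  by (rule prime_moduleI) (use kappa_mono_scale_eq_zero_iff in blast)+

text \<open>If \<open>u \<mapsto> a/t\<close> and \<open>v \<mapsto> b/t'\<close> with \<open>a, b \<notin> p\<close>, then \<open>(b t) u = (a t') v \<noteq> 0\<close>.\<close>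
lemma kappa_mono_uniform_module:
  assumes nontrivial: "(UNIV :: 'm set) \<noteq> {0}"
  shows "uniform_module s"
  unfolding uniform_module_def
proof (intro conjI allI impI nontrivial)
  fix U V assume UV: "submodule s U \<and> submodule s V \<and> U \<noteq> {0} \<and> V \<noteq> {0}"
  then obtain u v where uv: "u \<in> U" "u \<noteq> 0" "v \<in> V" "v \<noteq> 0" using submodule_zero by blast
  obtain a t where at: "t \<notin> p" "f u = kappa_class p a t" by (rule kappa_mono_obtain_class)
  obtain b t' where bt: "t' \<notin> p" "f v = kappa_class p b t'" by (rule kappa_mono_obtain_class)
  have "kappa_class p (b * t * a) t = kappa_class p (a * t' * b) t'"
    using kappa_class_eq_iff[OF p at(1) bt(1)] ring_ideal_zero[OF prime_ideal_ring_ideal[OF p]]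
    by (simp add: algebra_simps)
  then have "f (s (b * t) u) = f (s (a * t') v)"
    using kappa_mono_scale_class[OF at] kappa_mono_scale_class[OF bt] by simp
  then have eq: "s (b * t) u = s (a * t') v" by (rule injD[OF kappa_mono_inj])
  have "a \<notin> p" "b \<notin> p" using kappa_mono_eq_zero_iff at bt uv(2,4) by blast+
  then have "s (b * t) u \<noteq> 0"
    using kappa_mono_scale_eq_zero_iff uv(2) prime_ideal_mult_notin[OF p] at(1) by blast
  moreover have "s (b * t) u \<in> U" using UV uv(1) submodule_scale by blast
  moreover have "s (b * t) u \<in> V" unfolding eq using UV uv(3) submodule_scale by blast
  ultimately show "U \<inter> V \<noteq> {0}" by blast
qed

end

definition coordinate :: "'m \<Rightarrow> 'm \<Rightarrow> ('a \<times> 'a) set" where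
  "coordinate m\<^sub>0 x =
    (case SOME (a, t). t \<notin> Ann s \<and> s t x = s a m\<^sub>0 of (a, t) \<Rightarrow> kappa_class (Ann s) a t)"

context
  fixes m\<^sub>0 :: 'm
  assumes pm: "prime_module s" and um: "uniform_module s" and m\<^sub>0: "m\<^sub>0 \<noteq> 0"
begin

lemma exists_common_multiple: "\<exists>a t. t \<notin> Ann s \<and> s t x = s a m\<^sub>0"
proof (cases "x = 0")
  case True
  then show ?thesis
    using prime_ideal_one_notin[OF prime_ideal_Ann[OF pm]]
    by (intro exI[of _ 0] exI[of _ 1]) (simp add: scale_zero_left scale_zero_right)
next
  case False
  have "range (\<lambda>t. s t m\<^sub>0) \<noteq> {0}" using mem_cyclic_self[of m\<^sub>0] m\<^sub>0 by blast
  then obtain t where t: "s t x \<in> range (\<lambda>t. s t m\<^sub>0)" "s t x \<noteq> 0"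
    using uniform_module_cyclic_Int[OF um False submodule_cyclic] by blast
  moreover have "t \<notin> Ann s" using t(2) by (auto simp: Ann_def)
  ultimately show ?thesis by blast
qed

lemma coordinate_eq:
  assumes t: "t \<notin> Ann s" and tx: "s t x = s a m\<^sub>0"
  shows "coordinate m\<^sub>0 x = kappa_class (Ann s) a t"
proof -
  obtain a' t' where rep: "(SOME (a, t). t \<notin> Ann s \<and> s t x = s a m\<^sub>0) = (a', t')"
    by (metis prod.exhaust)
  have "\<exists>z. case z of (a, t) \<Rightarrow> t \<notin> Ann s \<and> s t x = s a m\<^sub>0"
    using exists_common_multiple by auto
  then have "case (SOME (a, t). t \<notin> Ann s \<and> s t x = s a m\<^sub>0) of (a, t) \<Rightarrow> t \<notin> Ann s \<and> s t x = s a m\<^sub>0"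
    by (rule someI_ex)
  then have t': "t' \<notin> Ann s" and t'x: "s t' x = s a' m\<^sub>0" using rep by simp_all
  have "s (t * a') m\<^sub>0 = s (t' * a) m\<^sub>0"
    by (metis t'x tx scale_scale scale_commute)
  then have "a' * t - a * t' \<in> Ann s"
    using prime_module_mem_Ann[OF pm _ m\<^sub>0] by (simp add: scale_diff_left mult.commute)
  then show ?thesis
    using kappa_class_eq_iff[OF prime_ideal_Ann[OF pm] t' t] rep by (simp add: coordinate_def)
qed

lemma obtain_coordinate:
  obtains a t where "t \<notin> Ann s" and "s t x = s a m\<^sub>0" and "coordinate m\<^sub>0 x = kappa_class (Ann s) a t"
  using exists_common_multiple coordinate_eq by blast

lemma kappa_mono_coordinate: "kappa_mono s (Ann s) (coordinate m\<^sub>0)"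
  unfolding kappa_mono_def
proof (intro conjI allI)
  have P: "prime_ideal (Ann s)" using pm by (rule prime_ideal_Ann)
  fix x
  obtain a t where a: "t \<notin> Ann s" "s t x = s a m\<^sub>0" "coordinate m\<^sub>0 x = kappa_class (Ann s) a t"
    by (rule obtain_coordinate)
  show "coordinate m\<^sub>0 x \<in> kappa (Ann s)" using kappa_class_in_kappa[OF a(1)] a(3) by simp
  fix y
  obtain b t' where b: "t' \<notin> Ann s" "s t' y = s b m\<^sub>0" "coordinate m\<^sub>0 y = kappa_class (Ann s) b t'"
    by (rule obtain_coordinate)
  have tt': "t * t' \<notin> Ann s" using prime_ideal_mult_notin[OF P a(1) b(1)] .
  have "s (t * t') (x + y) = s (a * t' + b * t) m\<^sub>0"
    using a(2) b(2) by (metis scale_add_right scale_add_left scale_scale scale_commute mult.commute)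
  then show "coordinate m\<^sub>0 (x + y) = kappa_add (Ann s) (coordinate m\<^sub>0 x) (coordinate m\<^sub>0 y)"
    using coordinate_eq[OF tt'] kappa_add_class[OF P a(1) b(1)] a(3) b(3) by simp
  fix c
  have "s t (s c x) = s (c * a) m\<^sub>0" using a(2) by (metis scale_scale scale_commute)
  then show "coordinate m\<^sub>0 (s c x) = kappa_scale (Ann s) c (coordinate m\<^sub>0 x)"
    using coordinate_eq[OF a(1)] kappa_scale_class[OF P a(1)] a(3) by simp
next
  show "inj (coordinate m\<^sub>0)"
  proof (rule injI)
    have P: "prime_ideal (Ann s)" using pm by (rule prime_ideal_Ann)
    fix x y assume eq: "coordinate m\<^sub>0 x = coordinate m\<^sub>0 y"
    obtain a t where a: "t \<notin> Ann s" "s t x = s a m\<^sub>0" "coordinate m\<^sub>0 x = kappa_class (Ann s) a t"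
      by (rule obtain_coordinate)
    obtain b t' where b: "t' \<notin> Ann s" "s t' y = s b m\<^sub>0" "coordinate m\<^sub>0 y = kappa_class (Ann s) b t'"
      by (rule obtain_coordinate)
    have "a * t' - b * t \<in> Ann s" using kappa_class_eq_iff[OF P a(1) b(1)] eq a(3) b(3) by simp
    then have "s (a * t') m\<^sub>0 = s (b * t) m\<^sub>0" by (simp add: Ann_def scale_diff_left)
    then have "s (t * t') x = s (t * t') y"
      using a(2) b(2) by (metis scale_scale scale_commute mult.commute)
    then show "x = y"
      using prime_module_inj_scale[OF pm prime_ideal_mult_notin[OF P a(1) b(1)]] by (simp add: inj_eq)
  qed
qed

end

lemma prime_uniform_module_kappa_mono:
  assumes "prime_module s" and "uniform_module s"
  shows "\<exists>f. kappa_mono s (Ann s) f"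
proof -
  obtain m\<^sub>0 :: 'm where "m\<^sub>0 \<noteq> 0" using assms(1) unfolding prime_module_def by blast
  then show ?thesis using kappa_mono_coordinate[OF assms] by blast
qed

end

theorem theorem1p5:
  fixes F :: "'a::comm_ring_1 set set"
    and s :: "'a \<Rightarrow> 'm::ab_group_add \<Rightarrow> 'm"
  assumes "noetherian_ring TYPE('a)"
    and "local_ring TYPE('a)"
    and "gabriel_topology F"
    and "is_module s"
  shows "(simple_F_torsion_free s F \<longleftrightarrow>
            prime_module s \<and> uniform_module s \<and> Ann s \<in> Fstar F)
       \<and> (prime_module s \<and> uniform_module s \<and> Ann s \<in> Fstar F \<longleftrightarrow>
            (\<exists>p\<in>Fstar F. \<exists>f. kappa_mono s p f) \<and> (UNIV :: 'm set) \<noteq> {0})"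
proof -
  interpret module_action s by (rule module_action.intro) (rule assms(4))
  have i_ii: "simple_F_torsion_free s F \<longleftrightarrow> prime_module s \<and> uniform_module s \<and> Ann s \<in> Fstar F"
    using simple_F_torsion_free_prime_module simple_F_torsion_free_uniform_module[OF assms(3)]
      simple_F_torsion_free_Ann_Fstar[OF assms(3)] Fstar_Ann_simple_F_torsion_free[OF assms(1,3)]
    by blast
  have ii_iii: "(\<exists>p\<in>Fstar F. \<exists>f. kappa_mono s p f) \<and> (UNIV :: 'm set) \<noteq> {0}"
    if "prime_module s" "uniform_module s" "Ann s \<in> Fstar F"
    using that prime_uniform_module_kappa_mono by (auto simp: prime_module_def)
  have iii_ii: "prime_module s \<and> uniform_module s \<and> Ann s \<in> Fstar F"
    if "p \<in> Fstar F" "kappa_mono s p f" "(UNIV :: 'm set) \<noteq> {0}" for p f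
  proof -
    have "prime_ideal p" using that(1) by (simp add: Fstar_def)
    with that show ?thesis
      using kappa_mono_prime_module kappa_mono_uniform_module kappa_mono_Ann by metis
  qed
  show ?thesis using i_ii ii_iii iii_ii by blast
qed

end
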